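(* Every $T_1$ fair topological space is a D-space.
   Context: A topological space $(X,\tau)$ is fair if for every collection $\mathcal D$ of closed discrete subsets of $X$ that is linearly ordered by inclusion (nested), if $\bigcup\mathcal D$ is discrete then $\bigcup\mathcal D$ is closed. An open neighborhood assignment is a function $N:X\to\tau$ with $x\in N(x)$ for all $x$. $X$ is a D-space if for every open neighborhood assignment $N$ there is a closed discrete $D\subseteq X$ with $\bigcup_{d\in D}N(d)=X$. *)

theory Defs
  imports "HOL-Analysis.Analysis"
begin

definition discrete_in :: "'a topology \<Rightarrow> 'a set \<Rightarrow> bool" where
  "discrete_in X D \<longleftrightarrow> D \<subseteq> topspace X \<and> subtopology X D = discrete_topology D"

definition closed_discrete_in :: "'a topology \<Rightarrow> 'a set \<Rightarrow> bool" where
  "closed_discrete_in X D \<longleftrightarrow> closedin X D \<and> discrete_in X D"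

definition fair_space :: "'a topology \<Rightarrow> bool" where
  "fair_space X \<longleftrightarrow>
     (\<forall>\<D>. (\<forall>D\<in>\<D>. closed_discrete_in X D) \<and> (\<forall>A\<in>\<D>. \<forall>B\<in>\<D>. A \<subseteq> B \<or> B \<subseteq> A)
           \<longrightarrow> discrete_in X (\<Union>\<D>) \<longrightarrow> closedin X (\<Union>\<D>))"

definition D_space :: "'a topology \<Rightarrow> bool" where
  "D_space X \<longleftrightarrow>
     (\<forall>N. (\<forall>x\<in>topspace X. openin X (N x) \<and> x \<in> N x)
          \<longrightarrow> (\<exists>D. closed_discrete_in X D \<and> (\<Union>d\<in>D. N d) = topspace X))"

end

theory Submission
  imports Defs
begin

text \<open>Given a neighbourhood assignment N, apply Zorn's lemma to the closed discrete sets, where E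
  is above D if E only adds points lying outside the N-neighbourhoods of D. Along a chain each
  point of the union keeps its N-neighbourhood free of later points, so the union is discrete, and
  fairness makes it closed. If the N-neighbourhoods of a maximal D missed a point, adding that
  point would extend D, since singletons are closed in a T1 space.\<close>

lemma discrete_in_iff:
  "discrete_in X D \<longleftrightarrow>
     D \<subseteq> topspace X \<and> (\<forall>x\<in>D. \<exists>V. openin X V \<and> x \<in> V \<and> V \<inter> D \<subseteq> {x})"
proof -
  have "x \<notin> X derived_set_of D \<longleftrightarrow>
          (x \<in> topspace X \<longrightarrow> (\<exists>V. openin X V \<and> x \<in> V \<and> V \<inter> D \<subseteq> {x}))" for x
    unfolding in_derived_set_of by auto
  then have "D \<inter> X derived_set_of D = {} \<longleftrightarrow>
               (\<forall>x\<in>D. x \<in> topspace X \<longrightarrow> (\<exists>V. openin X V \<and> x \<in> V \<and> V \<inter> D \<subseteq> {x}))"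
    by (metis disjoint_iff)
  then show ?thesis
    unfolding discrete_in_def subtopology_eq_discrete_topology_eq by (metis subsetD)
qed

lemma closed_discrete_in_insert:
  assumes "t1_space X" and D: "closed_discrete_in X D" and x: "x \<in> topspace X"
  shows "closed_discrete_in X (insert x D)"
proof (cases "x \<in> D")
  case False
  have closed_x: "closedin X {x}"
    using assms by (simp add: t1_space_closedin_singleton)
  have closed_D: "closedin X D" and disc_D: "discrete_in X D"
    using D unfolding closed_discrete_in_def by auto
  have "\<exists>V. openin X V \<and> y \<in> V \<and> V \<inter> insert x D \<subseteq> {y}" if y: "y \<in> insert x D" for y
  proof (cases "y = x")
    case True
    then show ?thesis
      using closed_D x False by (intro exI[of _ "topspace X - D"]) auto
  next
    case False
    then obtain V where "openin X V" "y \<in> V" "V \<inter> D \<subseteq> {y}"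
      using y False disc_D unfolding discrete_in_iff by auto
    with False closed_x show ?thesis
      by (intro exI[of _ "V \<inter> (topspace X - {x})"]) (auto dest: openin_subset)
  qed
  moreover have "insert x D \<subseteq> topspace X"
    using x disc_D unfolding discrete_in_iff by auto
  ultimately show ?thesis
    using closedin_Un[OF closed_x closed_D]
    unfolding closed_discrete_in_def discrete_in_iff by auto
qed (use D in \<open>simp add: insert_absorb\<close>)

definition end_extends :: "('a \<Rightarrow> 'a set) \<Rightarrow> 'a set \<Rightarrow> 'a set \<Rightarrow> bool" where
  "end_extends N D E \<longleftrightarrow> D \<subseteq> E \<and> (E - D) \<inter> (\<Union>d\<in>D. N d) = {}"

lemma end_extends_trans:
  "end_extends N D E \<Longrightarrow> end_extends N E F \<Longrightarrow> end_extends N D F"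
  unfolding end_extends_def by blast

lemma end_extends_Union_chain:
  assumes "\<forall>A\<in>\<C>. \<forall>B\<in>\<C>. end_extends N A B \<or> end_extends N B A" and "D \<in> \<C>"
  shows "end_extends N D (\<Union>\<C>)"
  using assms unfolding end_extends_def by blast

lemma discrete_in_Union_end_extends:
  assumes N: "\<forall>x\<in>topspace X. openin X (N x) \<and> x \<in> N x"
    and disc: "\<forall>D\<in>\<C>. discrete_in X D" and ext: "\<forall>D\<in>\<C>. end_extends N D (\<Union>\<C>)"
  shows "discrete_in X (\<Union>\<C>)"
  unfolding discrete_in_iff
proof
  show "\<Union>\<C> \<subseteq> topspace X"
    using disc unfolding discrete_in_iff by auto
  show "\<forall>x\<in>\<Union>\<C>. \<exists>V. openin X V \<and> x \<in> V \<and> V \<inter> \<Union>\<C> \<subseteq> {x}"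
  proof
    fix x assume "x \<in> \<Union>\<C>"
    then obtain D where "D \<in> \<C>" "x \<in> D" by auto
    then have "discrete_in X D" and "end_extends N D (\<Union>\<C>)"
      using disc ext by auto
    then obtain V where V: "openin X V" "x \<in> V" "V \<inter> D \<subseteq> {x}" and "D \<subseteq> topspace X"
      using \<open>x \<in> D\<close> unfolding discrete_in_iff by auto
    have "(\<Union>\<C> - D) \<inter> N x = {}"
      using \<open>end_extends N D (\<Union>\<C>)\<close> \<open>x \<in> D\<close> unfolding end_extends_def by auto
    then have "V \<inter> N x \<inter> \<Union>\<C> \<subseteq> {x}"
      using V(3) by auto
    moreover have "openin X (N x)" "x \<in> N x"
      using N \<open>D \<subseteq> topspace X\<close> \<open>x \<in> D\<close> by auto
    ultimately show "\<exists>V. openin X V \<and> x \<in> V \<and> V \<inter> \<Union>\<C> \<subseteq> {x}"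
      using V by (intro exI[of _ "V \<inter> N x"]) auto
  qed
qed

lemma fair_space_Union_end_extends_chain:
  assumes "fair_space X" and N: "\<forall>x\<in>topspace X. openin X (N x) \<and> x \<in> N x"
    and cd: "\<forall>D\<in>\<C>. closed_discrete_in X D"
    and chain: "\<forall>A\<in>\<C>. \<forall>B\<in>\<C>. end_extends N A B \<or> end_extends N B A"
  shows "closed_discrete_in X (\<Union>\<C>)" and "\<forall>D\<in>\<C>. end_extends N D (\<Union>\<C>)"
proof -
  show ext: "\<forall>D\<in>\<C>. end_extends N D (\<Union>\<C>)"
    using end_extends_Union_chain[OF chain] by blast
  have disc: "discrete_in X (\<Union>\<C>)"
    using discrete_in_Union_end_extends[OF N _ ext] cd unfolding closed_discrete_in_def by blast
  moreover have "\<forall>A\<in>\<C>. \<forall>B\<in>\<C>. A \<subseteq> B \<or> B \<subseteq> A"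
    using chain unfolding end_extends_def by blast
  ultimately have "closedin X (\<Union>\<C>)"
    using \<open>fair_space X\<close> cd unfolding fair_space_def by simp
  with disc show "closed_discrete_in X (\<Union>\<C>)"
    unfolding closed_discrete_in_def by simp
qed

lemma maximal_end_extends_covers:
  assumes "t1_space X" and N: "\<forall>x\<in>topspace X. openin X (N x) \<and> x \<in> N x"
    and D: "closed_discrete_in X D"
    and max: "\<And>E. closed_discrete_in X E \<Longrightarrow> end_extends N D E \<Longrightarrow> E = D"
  shows "(\<Union>d\<in>D. N d) = topspace X"
proof -
  have D_sub: "D \<subseteq> topspace X"
    using D unfolding closed_discrete_in_def discrete_in_iff by auto
  have "x \<in> (\<Union>d\<in>D. N d)" if x: "x \<in> topspace X" for x
  proof (rule ccontr)
    assume x_out: "x \<notin> (\<Union>d\<in>D. N d)"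
    then have "x \<notin> D"
      using N D_sub by auto
    moreover have "insert x D = D"
      using max[OF closed_discrete_in_insert[OF \<open>t1_space X\<close> D x]] x_out
      unfolding end_extends_def by blast
    ultimately show False
      by blast
  qed
  moreover have "(\<Union>d\<in>D. N d) \<subseteq> topspace X"
    using N D_sub by (auto dest: openin_subset)
  ultimately show ?thesis
    by blast
qed

theorem mainTheorem3:
  fixes X :: "'a topology"
  assumes "t1_space X" and "fair_space X"
  shows "D_space X"
  unfolding D_space_def
proof (intro allI impI)
  fix N assume N: "\<forall>x\<in>topspace X. openin X (N x) \<and> x \<in> N x"
  define \<A> where "\<A> = {D. closed_discrete_in X D}"
  have po: "partial_order_on \<A> (relation_of (end_extends N) \<A>)"
  proof (rule partial_order_on_relation_ofI)
    show "\<And>a b c. end_extends N a b \<Longrightarrow> end_extends N b c \<Longrightarrow> end_extends N a c"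
      by (rule end_extends_trans)
  qed (auto simp: end_extends_def)
  have chain_bound: "\<exists>U\<in>\<A>. \<forall>D\<in>\<C>. end_extends N D U"
    if "\<C> \<in> Chains (relation_of (end_extends N) \<A>)" for \<C>
  proof -
    have "\<forall>D\<in>\<C>. closed_discrete_in X D"
      and "\<forall>A\<in>\<C>. \<forall>B\<in>\<C>. end_extends N A B \<or> end_extends N B A"
      using that unfolding Chains_def relation_of_def \<A>_def by auto
    from fair_space_Union_end_extends_chain[OF \<open>fair_space X\<close> N this] show ?thesis
      unfolding \<A>_def by blast
  qed
  obtain D where "D \<in> \<A>" and "\<forall>E\<in>\<A>. end_extends N D E \<longrightarrow> E = D"
    using predicate_Zorn[OF po chain_bound] by blast
  then have "closed_discrete_in X D" and "(\<Union>d\<in>D. N d) = topspace X"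
    using maximal_end_extends_covers[OF \<open>t1_space X\<close> N] unfolding \<A>_def by auto
  then show "\<exists>D. closed_discrete_in X D \<and> (\<Union>d\<in>D. N d) = topspace X"
    by blast
qed

end
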